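(* Let $C=\begin{pmatrix}1&-2\\2&-1\end{pmatrix}$, let $n\ge 3$ be an odd integer, and put $\omega=e^{2\pi i/n}$, $\xi=e^{\pi i/3}$, $\eta=e^{\pi i/(2n)}$. For $0\le j,k\le n-1$ define $$X_{n,j,k}=\frac{(-1)^{(n+1)/2}}{i}\begin{pmatrix}-\xi^{-1}\eta\,\omega^{j}+\xi\,\eta^{-1}\omega^{k} & \eta\,\omega^{j}-\eta^{-1}\omega^{k}\\ -\eta\,\omega^{j}+\eta^{-1}\omega^{k} & \xi\,\eta\,\omega^{j}-\xi^{-1}\eta^{-1}\omega^{k}\end{pmatrix}.$$ Then the set of complex $2\times 2$ matrices $X$ satisfying $X^n=C^n$ is exactly $\{X_{n,j,k}:0\le j,k\le n-1\}$, and these $n^2$ matrices are pairwise distinct; in particular $X^n=C^n$ has exactly $n^2$ solutions.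
   Context: $i$ denotes the imaginary unit; all matrices have complex entries. *)

theory Defs
  imports "HOL-Analysis.Analysis"
begin

type_synonym cmat2 = "complex ^ 2 ^ 2"

text \<open>Matrix power with respect to matrix multiplication (the ring structure on vec
  in the library is componentwise, so we cannot use ^).\<close>
primrec matpow :: "'a::comm_ring_1 ^ 'n ^ 'n \<Rightarrow> nat \<Rightarrow> 'a ^ 'n ^ 'n" where
  "matpow A 0 = mat 1"
| "matpow A (Suc m) = A ** matpow A m"

definition mat2 :: "complex \<Rightarrow> complex \<Rightarrow> complex \<Rightarrow> complex \<Rightarrow> cmat2" where
  "mat2 a b c d = (\<chi> i j. if i = 1 then (if j = 1 then a else b) else (if j = 1 then c else d))"

definition Cmat :: cmat2 where
  "Cmat = mat2 1 (-2) 2 (-1)"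

definition Xsol :: "nat \<Rightarrow> nat \<Rightarrow> nat \<Rightarrow> cmat2" where
  "Xsol n j k =
    (let \<omega> = exp (2 * pi * \<i> / of_nat n);
         \<xi> = exp (pi * \<i> / 3);
         \<eta> = exp (pi * \<i> / (2 * of_nat n));
         s = (-1) ^ ((n + 1) div 2) / \<i>
     in (\<chi> i l. s * (mat2
           (- inverse \<xi> * \<eta> * \<omega> ^ j + \<xi> * inverse \<eta> * \<omega> ^ k)
           (\<eta> * \<omega> ^ j - inverse \<eta> * \<omega> ^ k)
           (- \<eta> * \<omega> ^ j + inverse \<eta> * \<omega> ^ k)
           (\<xi> * \<eta> * \<omega> ^ j - inverse \<xi> * inverse \<eta> * \<omega> ^ k)) $ i $ l))"

end

theory Submission
  imports Defs
begin

text \<open>Put \<open>\<xi> = e^(\<pi> i/3)\<close> and \<open>\<delta> = \<xi> - \<xi>\<inverse> = i\<surd>3\<close>. Since \<open>\<xi>\<close> and \<open>\<xi>\<inverse>\<close> are the roots of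
  \<open>t\<^sup>2 - t + 1\<close>, the matrix \<open>C\<close> has the eigenvectors \<open>(\<xi>\<inverse>, 1)\<close> and \<open>(\<xi>, 1)\<close> with eigenvalues
  \<open>-\<delta>\<close> and \<open>\<delta>\<close>; as \<open>n\<close> is odd, \<open>C\<^sup>n\<close> has the same eigenvectors and the distinct
  eigenvalues \<open>-\<delta>\<^sup>n\<close> and \<open>\<delta>\<^sup>n\<close>. A solution \<open>X\<close> of \<open>X\<^sup>n = C\<^sup>n\<close> commutes with \<open>C\<^sup>n\<close>, and a
  \<open>2 \<times> 2\<close> matrix commuting with a non-scalar matrix \<open>A\<close> is of the form \<open>\<alpha> + \<beta> A\<close>. So \<open>X\<close> is
  diagonal in the same eigenbasis, with eigenvalues \<open>u, v\<close> satisfying \<open>u\<^sup>n = -\<delta>\<^sup>n\<close> and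
  \<open>v\<^sup>n = \<delta>\<^sup>n\<close>: \<open>n\<close> choices each. The matrices \<open>X\<^sub>n\<^sub>,\<^sub>j\<^sub>,\<^sub>k\<close> are exactly these, with
  \<open>u = \<delta> \<sigma> \<eta> \<omega>\<^sup>j\<close> and \<open>v = \<delta> \<sigma> \<eta>\<inverse> \<omega>\<^sup>k\<close>, where \<open>\<sigma> = (-1)\<^bsup>(n+1)/2\<^esup>/i\<close> and \<open>(\<sigma> \<eta>)\<^sup>n = -1\<close>.\<close>

lemma mat2_mult:
  "mat2 a b c d ** mat2 a' b' c' d' =
     mat2 (a * a' + b * c') (a * b' + b * d') (c * a' + d * c') (c * b' + d * d')"
  by (simp add: mat2_def matrix_matrix_mult_def vec_eq_iff forall_2 sum_2)

lemma mat2_add: "mat2 a b c d + mat2 a' b' c' d' = mat2 (a + a') (b + b') (c + c') (d + d')"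
  by (simp add: mat2_def vec_eq_iff forall_2)

lemma mat2_eq_iff: "mat2 a b c d = mat2 a' b' c' d' \<longleftrightarrow> a = a' \<and> b = b' \<and> c = c' \<and> d = d'"
  by (simp add: mat2_def vec_eq_iff forall_2)

lemma mat2_entries: "(X :: cmat2) = mat2 (X$1$1) (X$1$2) (X$2$1) (X$2$2)"
  by (simp add: mat2_def vec_eq_iff forall_2)

lemma mat_eq_mat2: "mat c = mat2 c 0 0 c"
  by (simp add: mat2_def mat_def vec_eq_iff forall_2)

lemma matpow_commute: "A ** matpow A m = matpow A m ** A"
  by (induction m) (simp_all add: matrix_mul_assoc)

lemma commute_mat2_imp_affine:
  fixes A X :: cmat2
  assumes "X ** A = A ** X" and "A $ 1 $ 2 \<noteq> 0"
  shows "\<exists>\<alpha> \<beta>. X = mat \<alpha> + mat \<beta> ** A"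
proof -
  obtain p q r s where X: "X = mat2 p q r s"
    using mat2_entries by blast
  obtain a b c d where A: "A = mat2 a b c d"
    using mat2_entries by blast
  have "b \<noteq> 0"
    using assms(2) by (simp add: A mat2_def)
  have "p * a + q * c = a * p + b * r" and "p * b + q * d = a * q + b * s"
    using assms(1) unfolding X A mat2_mult mat2_eq_iff by blast+
  with \<open>b \<noteq> 0\<close> have "r = q / b * c" and "s = p - q / b * a + q / b * d"
    by (simp_all add: field_simps mult.commute)
  with \<open>b \<noteq> 0\<close> have "X = mat (p - q / b * a) + mat (q / b) ** A"
    unfolding X A mat_eq_mat2 mat2_mult mat2_add mat2_eq_iff by simp
  then show ?thesis
    by blast
qed

text \<open>For \<open>x y = 1\<close>, \<open>eigen_mat2 x y u v\<close> is \<open>P diag(u, v) P\<inverse>\<close> with \<open>P = [[y, x], [1, 1]]\<close>: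
  it has the eigenvector \<open>(y, 1)\<close> for \<open>u\<close> and \<open>(x, 1)\<close> for \<open>v\<close>.\<close>

definition eigen_mat2 :: "complex \<Rightarrow> complex \<Rightarrow> complex \<Rightarrow> complex \<Rightarrow> cmat2" where
  "eigen_mat2 x y u v =
     mat2 ((- (u * y) + v * x) / (x - y)) ((u - v) / (x - y)) ((v - u) / (x - y)) ((u * x - v * y) / (x - y))"

text \<open>Lets the common factor \<open>x - y\<close> of the entries of a product cancel, which
  \<open>field_simps\<close> alone does not do.\<close>

lemma divide_mult_add_divide_mult:
  fixes t :: "'a::field"
  assumes "t \<noteq> 0" and "a * b + c * d = t * e"
  shows "a / t * (b / t) + c / t * (d / t) = e / t"
proof -
  have "a / t * (b / t) + c / t * (d / t) = (a * b + c * d) / (t * t)"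
    by (simp add: add_divide_distrib)
  with assms show ?thesis
    by simp
qed

lemma eigen_mat2_mult:
  assumes "x * y = 1" and "x \<noteq> y"
  shows "eigen_mat2 x y u v ** eigen_mat2 x y u' v' = eigen_mat2 x y (u * u') (v * v')"
proof -
  have "x \<noteq> 0"
    using assms(1) by auto
  have y: "y = inverse x"
    using inverse_unique[OF assms(1)] by simp
  have "x - y \<noteq> 0"
    using assms(2) by simp
  show ?thesis
    unfolding eigen_mat2_def mat2_mult mat2_eq_iff
    by (intro conjI divide_mult_add_divide_mult \<open>x - y \<noteq> 0\<close>)
      (use \<open>x \<noteq> 0\<close> in \<open>simp_all add: y field_simps\<close>)
qed

lemma eigen_mat2_1_1: "x \<noteq> y \<Longrightarrow> eigen_mat2 x y 1 1 = mat 1"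
  by (simp add: eigen_mat2_def mat_eq_mat2 mat2_eq_iff)

lemma matpow_eigen_mat2:
  assumes "x * y = 1" and "x \<noteq> y"
  shows "matpow (eigen_mat2 x y u v) m = eigen_mat2 x y (u^m) (v^m)"
  by (induction m) (simp_all add: eigen_mat2_1_1 eigen_mat2_mult assms)

lemma eigen_mat2_eq_iff:
  assumes "x \<noteq> y"
  shows "eigen_mat2 x y u v = eigen_mat2 x y u' v' \<longleftrightarrow> u = u' \<and> v = v'"
proof
  assume "eigen_mat2 x y u v = eigen_mat2 x y u' v'"
  with assms have "u - v = u' - v'" and "v * x - u * y = v' * x - u' * y"
    unfolding eigen_mat2_def mat2_eq_iff by simp_all
  moreover have "(u - u') * (x - y) = (v * x - u * y) - (v' * x - u' * y) + x * ((u - v) - (u' - v'))"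
    by (simp add: algebra_simps)
  ultimately have "(u - u') * (x - y) = 0"
    by simp
  with assms \<open>u - v = u' - v'\<close> show "u = u' \<and> v = v'"
    by simp
qed simp

lemma affine_eigen_mat2:
  "x \<noteq> y \<Longrightarrow>
    mat \<alpha> + mat \<beta> ** eigen_mat2 x y a b = eigen_mat2 x y (\<alpha> + \<beta> * a) (\<alpha> + \<beta> * b)"
  unfolding eigen_mat2_def mat_eq_mat2 mat2_mult mat2_add mat2_eq_iff by (simp add: field_simps)

lemma commute_eigen_mat2:
  assumes "x \<noteq> y" and "a \<noteq> b" and "X ** eigen_mat2 x y a b = eigen_mat2 x y a b ** X"
  shows "\<exists>u v. X = eigen_mat2 x y u v"
proof -
  have "eigen_mat2 x y a b $ 1 $ 2 \<noteq> 0"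
    using assms(1,2) by (simp add: eigen_mat2_def mat2_def)
  with assms(3) obtain \<alpha> \<beta> where "X = mat \<alpha> + mat \<beta> ** eigen_mat2 x y a b"
    using commute_mat2_imp_affine by blast
  then show ?thesis
    unfolding affine_eigen_mat2[OF assms(1)] by blast
qed

lemma matpow_eq_eigen_mat2_iff:
  assumes "x * y = 1" and "x \<noteq> y" and "a \<noteq> b"
  shows "matpow X n = eigen_mat2 x y a b \<longleftrightarrow> (\<exists>u v. X = eigen_mat2 x y u v \<and> u^n = a \<and> v^n = b)"
proof
  assume pow: "matpow X n = eigen_mat2 x y a b"
  then have "X ** eigen_mat2 x y a b = eigen_mat2 x y a b ** X"
    using matpow_commute[of X n] by simp
  then obtain u v where X: "X = eigen_mat2 x y u v"
    using commute_eigen_mat2[OF assms(2,3)] by blast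
  with pow have "eigen_mat2 x y (u^n) (v^n) = eigen_mat2 x y a b"
    by (simp add: matpow_eigen_mat2[OF assms(1,2)])
  then have "u^n = a \<and> v^n = b"
    by (simp only: eigen_mat2_eq_iff[OF assms(2)])
  with X show "\<exists>u v. X = eigen_mat2 x y u v \<and> u^n = a \<and> v^n = b"
    by blast
next
  assume "\<exists>u v. X = eigen_mat2 x y u v \<and> u^n = a \<and> v^n = b"
  then show "matpow X n = eigen_mat2 x y a b"
    using matpow_eigen_mat2[OF assms(1,2)] by blast
qed

lemma power_root_unity:
  "exp (2 * pi * \<i> / of_nat n) ^ j = exp (2 * of_real pi * \<i> * of_nat j / of_nat n)"
  by (simp add: exp_of_nat_mult[symmetric] field_simps)

lemma power_eq_power_iff_root_unity:
  fixes w z :: complex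
  assumes "n > 0" and "w \<noteq> 0"
  shows "z ^ n = w ^ n \<longleftrightarrow> (\<exists>j<n. z = w * exp (2 * pi * \<i> / of_nat n) ^ j)"
proof
  assume "z ^ n = w ^ n"
  with assms(2) have "(z / w) ^ n = 1"
    by (simp add: power_divide)
  with assms(1) obtain j where "j < n" and "z / w = exp (2 * pi * \<i> / of_nat n) ^ j"
    unfolding power_root_unity using complex_roots_unity[of n] by auto
  with assms(2) show "\<exists>j<n. z = w * exp (2 * pi * \<i> / of_nat n) ^ j"
    by (auto simp: field_simps)
next
  have "exp (2 * pi * \<i> / of_nat n) ^ n = 1"
    using complex_root_unity[of n 1] assms(1) by simp
  then have "(exp (2 * pi * \<i> / of_nat n) ^ j) ^ n = 1" for j
    by (metis power_mult mult.commute power_one)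
  moreover assume "\<exists>j<n. z = w * exp (2 * pi * \<i> / of_nat n) ^ j"
  ultimately show "z ^ n = w ^ n"
    by (auto simp: power_mult_distrib)
qed

lemma inj_on_power_root_unity: "inj_on (\<lambda>j. exp (2 * pi * \<i> / of_nat n) ^ j) {..<n}"
proof (rule inj_onI)
  fix j k
  assume "j \<in> {..<n}" and "k \<in> {..<n}"
    and "exp (2 * pi * \<i> / of_nat n) ^ j = exp (2 * pi * \<i> / of_nat n) ^ k"
  then show "j = k"
    unfolding power_root_unity by (simp add: complex_root_unity_eq)
qed

lemma solutions_matpow_eq_eigen_mat2_power:
  assumes "x * y = 1" and "x \<noteq> y" and "n > 0" and "a \<noteq> 0" and "b \<noteq> 0" and "a ^ n \<noteq> b ^ n"
  shows "{X. matpow X n = eigen_mat2 x y (a ^ n) (b ^ n)} =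
    (\<lambda>(j, k). eigen_mat2 x y (a * exp (2 * pi * \<i> / of_nat n) ^ j) (b * exp (2 * pi * \<i> / of_nat n) ^ k))
      ` ({..<n} \<times> {..<n})"
  unfolding matpow_eq_eigen_mat2_iff[OF assms(1,2,6)]
    power_eq_power_iff_root_unity[OF assms(3,4)] power_eq_power_iff_root_unity[OF assms(3,5)]
  by auto

lemma inj_on_eigen_mat2_root_unity:
  assumes "x \<noteq> y" and "a \<noteq> 0" and "b \<noteq> 0"
  shows "inj_on
    (\<lambda>(j, k). eigen_mat2 x y (a * exp (2 * pi * \<i> / of_nat n) ^ j) (b * exp (2 * pi * \<i> / of_nat n) ^ k))
    ({..<n} \<times> {..<n})"
  using inj_on_power_root_unity[of n, unfolded inj_on_def] assms
  by (auto intro!: inj_onI simp: eigen_mat2_eq_iff)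

lemma exp_pi_third:
  shows "exp (pi * \<i> / 3) + inverse (exp (pi * \<i> / 3)) = 1"
    and "exp (pi * \<i> / 3) \<noteq> inverse (exp (pi * \<i> / 3))"
proof -
  have cis: "exp (pi * \<i> / 3) = cis (pi / 3)"
    by (simp add: cis_conv_exp mult.commute)
  show "exp (pi * \<i> / 3) + inverse (exp (pi * \<i> / 3)) = 1"
    and "exp (pi * \<i> / 3) \<noteq> inverse (exp (pi * \<i> / 3))"
    unfolding cis by (simp_all add: complex_eq_iff cos_60 sin_60)
qed

lemma Cmat_eq_eigen_mat2:
  assumes "x + y = 1" and "x \<noteq> y"
  shows "Cmat = eigen_mat2 x y (- (x - y)) (x - y)"
proof -
  have "x - y \<noteq> 0"
    using assms(2) by simp
  moreover have "y + x * x = x + y * y"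
  proof -
    have y: "y = 1 - x"
      using assms(1) by (simp add: eq_diff_eq add.commute)
    show ?thesis
      unfolding y by (simp add: algebra_simps)
  qed
  ultimately show ?thesis
    unfolding Cmat_def eigen_mat2_def mat2_eq_iff using assms(1) by (simp add: field_simps)
qed

lemma matpow_Cmat:
  assumes "odd n" and "x * y = 1" and "x + y = 1" and "x \<noteq> y"
  shows "matpow Cmat n = eigen_mat2 x y (- ((x - y) ^ n)) ((x - y) ^ n)"
  unfolding Cmat_eq_eigen_mat2[OF assms(3,4)] matpow_eigen_mat2[OF assms(2,4)] power_minus_odd[OF assms(1)] ..

lemma power_exp_pi_half_div:
  assumes "n \<noteq> 0"
  shows "exp (pi * \<i> / (2 * of_nat n)) ^ n = \<i>"
proof -
  have "exp (pi * \<i> / (2 * of_nat n)) ^ n = exp (\<i> * of_real (pi / 2))"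
    unfolding exp_of_nat_mult[symmetric] using assms by (simp add: field_simps)
  also have "\<dots> = \<i>"
    by (metis cis_conv_exp cis_pi_half)
  finally show ?thesis .
qed

lemma power_sign_odd:
  assumes "odd n"
  shows "((-1) ^ ((n + 1) div 2) / \<i> :: complex) ^ n = \<i>"
proof -
  define m where "m = (n + 1) div 2"
  define \<sigma> :: complex where "\<sigma> = (-1) ^ m / \<i>"
  have "n + 1 = 2 * m"
    using assms unfolding m_def by presburger
  moreover have "\<sigma> ^ 2 = -1"
    unfolding \<sigma>_def power_divide by (simp flip: power_mult add: mult.commute[of m])
  ultimately have "\<sigma> * \<sigma> ^ n = (-1) ^ m"
    by (simp flip: power_Suc add: power_mult)
  moreover have "\<sigma> \<noteq> 0"
    unfolding \<sigma>_def by simp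
  ultimately have "\<sigma> ^ n = (-1) ^ m / \<sigma>"
    by (simp add: eq_divide_eq mult.commute)
  also have "\<dots> = \<i>"
    unfolding \<sigma>_def by simp
  finally show ?thesis
    unfolding \<sigma>_def m_def .
qed

lemma eigen_mat2_scaled:
  assumes "x \<noteq> y"
  shows "eigen_mat2 x y ((x - y) * a) ((x - y) * b) = mat2 (x * b - y * a) (a - b) (b - a) (x * a - y * b)"
proof -
  have "x - y \<noteq> 0"
    using assms by simp
  then show ?thesis
    unfolding eigen_mat2_def mat2_eq_iff by (simp add: field_simps)
qed

lemma Xsol_eq_eigen_mat2:
  fixes n j k :: nat
  defines "\<xi> \<equiv> exp (pi * \<i> / 3)" and "\<eta> \<equiv> exp (pi * \<i> / (2 * of_nat n))"
    and "\<omega> \<equiv> exp (2 * pi * \<i> / of_nat n)" and "\<sigma> \<equiv> (-1) ^ ((n + 1) div 2) / \<i>"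
  shows "Xsol n j k = eigen_mat2 \<xi> (inverse \<xi>)
    ((\<xi> - inverse \<xi>) * (\<sigma> * \<eta>) * \<omega> ^ j) ((\<xi> - inverse \<xi>) * (\<sigma> * inverse \<eta>) * \<omega> ^ k)"
proof -
  have "\<xi> \<noteq> inverse \<xi>"
    using exp_pi_third(2) unfolding \<xi>_def .
  then show ?thesis
    unfolding Xsol_def Let_def assms[symmetric] mult.assoc[of "\<xi> - inverse \<xi>"]
      eigen_mat2_scaled[OF \<open>\<xi> \<noteq> inverse \<xi>\<close>]
    by (simp add: mat2_def vec_eq_iff forall_2 algebra_simps)
qed

theorem mainTheorem1:
  fixes n :: nat
  assumes "n \<ge> 3" and "odd n"
  shows "{X :: cmat2. matpow X n = matpow Cmat n} = {Xsol n j k | j k. j < n \<and> k < n}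
         \<and> inj_on (\<lambda>(j, k). Xsol n j k) ({..<n} \<times> {..<n})
         \<and> card {X :: cmat2. matpow X n = matpow Cmat n} = n ^ 2"
proof -
  define \<xi> :: complex where "\<xi> = exp (pi * \<i> / 3)"
  define \<delta> where "\<delta> = \<xi> - inverse \<xi>"
  define \<eta> :: complex where "\<eta> = exp (pi * \<i> / (2 * of_nat n))"
  define \<sigma> :: complex where "\<sigma> = (-1) ^ ((n + 1) div 2) / \<i>"
  define a b where "a = \<delta> * (\<sigma> * \<eta>)" and "b = \<delta> * (\<sigma> * inverse \<eta>)"
  have "n > 0" and \<xi>: "\<xi> * inverse \<xi> = 1" "\<xi> + inverse \<xi> = 1" "\<xi> \<noteq> inverse \<xi>"
    using assms(1) unfolding \<xi>_def by (simp_all add: exp_pi_third)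
  have "\<sigma> ^ n = \<i>" and "\<eta> ^ n = \<i>"
    unfolding \<sigma>_def \<eta>_def using power_sign_odd[OF assms(2)] power_exp_pi_half_div \<open>n > 0\<close> by auto
  then have pow: "a ^ n = - (\<delta> ^ n)" "b ^ n = \<delta> ^ n"
    unfolding a_def b_def power_mult_distrib power_inverse by simp_all
  have "\<delta> \<noteq> 0"
    using \<xi>(3) unfolding \<delta>_def by simp
  with pow \<open>n > 0\<close> have ab: "a \<noteq> 0" "b \<noteq> 0" "a ^ n \<noteq> b ^ n"
    by (auto simp: power_0_left)
  have "matpow Cmat n = eigen_mat2 \<xi> (inverse \<xi>) (a ^ n) (b ^ n)"
    unfolding pow \<delta>_def using matpow_Cmat[OF assms(2) \<xi>] .
  moreover have "Xsol n j k = eigen_mat2 \<xi> (inverse \<xi>)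
      (a * exp (2 * pi * \<i> / of_nat n) ^ j) (b * exp (2 * pi * \<i> / of_nat n) ^ k)" for j k
    unfolding Xsol_eq_eigen_mat2 a_def b_def \<xi>_def \<eta>_def \<sigma>_def \<delta>_def ..
  ultimately have sol: "{X. matpow X n = matpow Cmat n} = (\<lambda>(j, k). Xsol n j k) ` ({..<n} \<times> {..<n})"
    and inj: "inj_on (\<lambda>(j, k). Xsol n j k) ({..<n} \<times> {..<n})"
    using solutions_matpow_eq_eigen_mat2_power[OF \<xi>(1,3) \<open>n > 0\<close> ab]
      inj_on_eigen_mat2_root_unity[OF \<xi>(3) ab(1,2)] by simp_all
  then have "card {X. matpow X n = matpow Cmat n} = n ^ 2"
    by (simp add: card_image card_cartesian_product power2_eq_square)
  with sol inj show ?thesis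
    by auto
qed

end
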